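(* For every $c\in(0,1]$ and Lebesgue-almost every irrational $\alpha\in(0,1)$, setting $T_n:=S(\alpha,n,\lceil cn\rceil)^{1/\lceil cn\rceil}$, we have $|T_n-T_{n+1}|\to0$ as $n\to\infty$; more precisely $|T_n-T_{n+1}|=O\!\left(\frac{\log n}{n}\right)$.
   Context: Every irrational $\alpha\in(0,1)$ has a unique continued fraction expansion $\alpha = 1/(a_1(\alpha)+1/(a_2(\alpha)+\cdots))$ with digits $a_i(\alpha)\in\mathbb{N}_{\ge1}$. For $1\le k\le n$ integers, \[ S(\alpha,n,k) := \binom{n}{k}^{-1}\sum_{1\le i_1<\cdots<i_k\le n} a_{i_1}(\alpha)\cdots a_{i_k}(\alpha). \] *)

theory Defs
  imports "HOL-Analysis.Analysis" "HOL-Library.Landau_Symbols"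
begin

definition gauss_map :: "real \<Rightarrow> real" where
  "gauss_map x = frac (1 / x)"

definition cf_digit :: "real \<Rightarrow> nat \<Rightarrow> nat" where
  "cf_digit \<alpha> i = nat \<lfloor>1 / ((gauss_map ^^ (i - 1)) \<alpha>)\<rfloor>"

definition S_avg :: "real \<Rightarrow> nat \<Rightarrow> nat \<Rightarrow> real" where
  "S_avg \<alpha> n k = (\<Sum>I\<in>{I. I \<subseteq> {1..n} \<and> card I = k}. \<Prod>i\<in>I. real (cf_digit \<alpha> i))
                   / real (n choose k)"

end

theory Submission
  imports Defs "HOL-Real_Asymp.Real_Asymp"
begin

text \<open>
  Write \<open>T\<^sub>n = exp (ln S\<^sub>n / k\<^sub>n)\<close> with \<open>k\<^sub>n = \<lceil>c n\<rceil>\<close>. Passing from \<open>n\<close> to \<open>n + 1\<close> changes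
  \<open>k\<^sub>n\<close> by at most one and multiplies the average \<open>S\<^sub>n\<close> of elementary symmetric products by a
  factor between \<open>1/(n + 1)\<close> and \<open>(n + 1)(M + 1)\<close>, where \<open>M\<close> bounds the first \<open>n + 1\<close> digits.
  So if the digits grow at most polynomially, \<open>ln S\<close> changes by \<open>O(log n)\<close>, and if moreover
  \<open>a\<^sub>1 \<cdots> a\<^sub>n \<le> B\<^sup>n\<close> then \<open>ln S\<^sub>n / k\<^sub>n\<close> stays bounded; together
  \<open>|T\<^sub>n - T\<^sub>n\<^sub>+\<^sub>1| = O(log n / n)\<close>.

  Both growth conditions hold almost surely by Borel--Cantelli. The Gauss measure
  \<open>dx/(1 + x)\<close> is invariant under the Gauss map, which gives \<open>P(a\<^sub>i \<ge> m) \<le> 2/m\<close>, and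
  integrating over the branches of the Gauss map gives
  \<open>E(\<surd>(a\<^sub>1 \<cdots> a\<^sub>n)) \<le> (2 \<zeta>(3/2))\<^sup>n\<close>, so Markov's inequality applies with \<open>B = (4 \<zeta>(3/2))\<^sup>2\<close>.
\<close>

section \<open>Elementary symmetric polynomials\<close>

definition esym :: "(nat \<Rightarrow> real) \<Rightarrow> nat \<Rightarrow> nat \<Rightarrow> real" where
  "esym a n k = (\<Sum>I\<in>{I. I \<subseteq> {1..n} \<and> card I = k}. \<Prod>i\<in>I. a i)"

lemma finite_subsets_atLeastAtMost: "finite {I. I \<subseteq> {1..n::nat} \<and> card I = k}"
  by (rule finite_subset[of _ "Pow {1..n}"]) auto

lemma esym_0_right [simp]: "esym a n 0 = 1"
proof -
  have "I = {}" if "I \<subseteq> {1..n}" "card I = 0" for I :: "nat set"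
    using that finite_subset[OF that(1)] by simp
  then have "{I. I \<subseteq> {1..n} \<and> card I = 0} = {{}}" by auto
  then show ?thesis by (simp add: esym_def)
qed

lemma esym_0_Suc [simp]: "esym a 0 (Suc k) = 0"
  by (simp add: esym_def)

lemma subsets_Suc_card_Suc:
  "{I. I \<subseteq> {1..Suc n} \<and> card I = Suc k} =
     {I. I \<subseteq> {1..n} \<and> card I = Suc k} \<union> insert (Suc n) ` {I. I \<subseteq> {1..n} \<and> card I = k}"
    (is "?L = ?A \<union> insert (Suc n) ` ?B")
proof (intro equalityI subsetI)
  fix I assume I: "I \<in> ?L"
  then have "finite I" using finite_subset[of I "{1..Suc n}"] by auto
  show "I \<in> ?A \<union> insert (Suc n) ` ?B"
  proof (cases "Suc n \<in> I")
    case True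
    then have "I - {Suc n} \<in> ?B" "I = insert (Suc n) (I - {Suc n})"
      using I \<open>finite I\<close> by (auto simp: card_Diff_singleton)
    then show ?thesis by blast
  next
    case False
    then show ?thesis using I by (auto simp: le_Suc_eq)
  qed
next
  fix I assume "I \<in> ?A \<union> insert (Suc n) ` ?B"
  then consider "I \<in> ?A" | J where "J \<in> ?B" "I = insert (Suc n) J" by blast
  then show "I \<in> ?L"
  proof cases
    case 2
    then have "finite J" "Suc n \<notin> J" using finite_subset[of J "{1..n}"] by auto
    then show ?thesis using 2 by auto
  qed auto
qed

lemma esym_Suc_Suc: "esym a (Suc n) (Suc k) = esym a n (Suc k) + a (Suc n) * esym a n k"
proof -
  let ?A = "{I. I \<subseteq> {1..n} \<and> card I = Suc k}"
  let ?B = "{I. I \<subseteq> {1..n} \<and> card I = k}"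
  have inj: "inj_on (insert (Suc n)) ?B"
  proof (rule inj_onI)
    fix I J assume "I \<in> ?B" "J \<in> ?B" "insert (Suc n) I = insert (Suc n) J"
    moreover have "Suc n \<notin> I" "Suc n \<notin> J" using calculation by auto
    ultimately show "I = J" by (metis Diff_insert_absorb)
  qed
  have "esym a (Suc n) (Suc k) = (\<Sum>I\<in>?A. \<Prod>i\<in>I. a i) + (\<Sum>I\<in>insert (Suc n) ` ?B. \<Prod>i\<in>I. a i)"
    unfolding esym_def subsets_Suc_card_Suc
    by (rule sum.union_disjoint) (auto simp: finite_subsets_atLeastAtMost)
  also have "(\<Sum>I\<in>insert (Suc n) ` ?B. \<Prod>i\<in>I. a i) = (\<Sum>J\<in>?B. a (Suc n) * (\<Prod>i\<in>J. a i))"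
    unfolding sum.reindex[OF inj] o_def
    by (intro sum.cong refl prod.insert) (auto dest: finite_subset[OF _ finite_atLeastAtMost])
  finally show ?thesis by (simp add: esym_def sum_distrib_left)
qed

lemma esym_nonneg:
  assumes "\<And>i. i \<in> {1..n} \<Longrightarrow> 0 \<le> a i"
  shows "0 \<le> esym a n k"
  unfolding esym_def using assms by (intro sum_nonneg prod_nonneg) auto

lemma binomial_le_esym:
  assumes "\<And>i. i \<in> {1..n} \<Longrightarrow> 1 \<le> a i"
  shows "real (n choose k) \<le> esym a n k"
proof -
  have "real (n choose k) = (\<Sum>I\<in>{I. I \<subseteq> {1..n} \<and> card I = k}. 1)"
    using n_subsets[of "{1..n}" k] by simp
  also have "\<dots> \<le> esym a n k"
    unfolding esym_def using assms by (intro sum_mono prod_ge_1) auto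
  finally show ?thesis .
qed

lemma esym_le_prod_one_plus:
  assumes "\<And>i. i \<in> {1..n} \<Longrightarrow> 0 \<le> a i"
  shows "esym a n k \<le> (\<Prod>i\<in>{1..n}. 1 + a i)"
  using assms
proof (induction n arbitrary: k)
  case 0
  then show ?case by (cases k) auto
next
  case (Suc n)
  have nonneg: "0 \<le> a i" if "i \<in> {1..n}" for i using Suc.prems that by auto
  have an: "0 \<le> a (Suc n)" using Suc.prems by auto
  have P1: "1 \<le> (\<Prod>i\<in>{1..n}. 1 + a i)" using nonneg by (intro prod_ge_1) auto
  have "esym a (Suc n) k \<le> (1 + a (Suc n)) * (\<Prod>i\<in>{1..n}. 1 + a i)"
  proof (cases k)
    case 0
    then show ?thesis using an P1 by (simp add: mult_ge1_I)
  next
    case (Suc j)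
    have "esym a (Suc n) k = esym a n (Suc j) + a (Suc n) * esym a n j"
      by (simp add: Suc esym_Suc_Suc)
    also have "\<dots> \<le> (\<Prod>i\<in>{1..n}. 1 + a i) + a (Suc n) * (\<Prod>i\<in>{1..n}. 1 + a i)"
      using Suc.IH nonneg an by (intro add_mono mult_left_mono) auto
    finally show ?thesis by (simp add: algebra_simps)
  qed
  then show ?case by (simp add: atLeastAtMostSuc_conv mult.commute)
qed

lemma esym_step_lower:
  assumes "\<And>i. i \<in> {1..n} \<Longrightarrow> 1 \<le> a i"
  shows "(real n - real k) * esym a n k \<le> (real k + 1) * esym a n (Suc k)"
  using assms
proof (induction n arbitrary: k)
  case 0
  then show ?case by (cases k) auto
next
  case (Suc n)
  have an: "1 \<le> a (Suc n)" using Suc.prems by auto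
  have a1: "\<And>i. i \<in> {1..n} \<Longrightarrow> 1 \<le> a i" using Suc.prems by auto
  then have nonneg: "\<And>j. 0 \<le> esym a n j" by (intro esym_nonneg) (meson order.trans zero_le_one)
  show ?case
  proof (cases k)
    case 0
    then show ?thesis using Suc.IH[OF a1, of 0] an esym_Suc_Suc[of a n 0] by simp
  next
    case (Suc j)
    have IH: "(real n - real (Suc j)) * esym a n (Suc j) \<le> (real (Suc j) + 1) * esym a n (Suc (Suc j))"
             "(real n - real j) * esym a n j \<le> (real j + 1) * esym a n (Suc j)"
      using Suc.IH[OF a1] by blast+
    have "a (Suc n) * ((real n - real j) * esym a n j) \<le> a (Suc n) * ((real j + 1) * esym a n (Suc j))"
      using IH(2) an by (intro mult_left_mono) auto
    moreover have "esym a n (Suc j) \<le> a (Suc n) * esym a n (Suc j)"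
      using mult_right_mono[OF an nonneg[of "Suc j"]] by simp
    ultimately show ?thesis
      using IH(1) unfolding Suc esym_Suc_Suc of_nat_Suc by (simp add: algebra_simps)
  qed
qed

lemma esym_step_upper:
  assumes "\<And>i. i \<in> {1..n} \<Longrightarrow> 1 \<le> a i" "\<And>i. i \<in> {1..n} \<Longrightarrow> a i \<le> M"
  shows "(real k + 1) * esym a n (Suc k) \<le> M * (real n - real k) * esym a n k"
  using assms
proof (induction n arbitrary: k)
  case 0
  then show ?case by (cases k) auto
next
  case (Suc n)
  have an: "1 \<le> a (Suc n)" "a (Suc n) \<le> M" using Suc.prems by auto
  have a1: "\<And>i. i \<in> {1..n} \<Longrightarrow> 1 \<le> a i" "\<And>i. i \<in> {1..n} \<Longrightarrow> a i \<le> M"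
    using Suc.prems by auto
  then have nonneg: "\<And>j. 0 \<le> esym a n j" by (intro esym_nonneg) (meson order.trans zero_le_one)
  show ?case
  proof (cases k)
    case 0
    then show ?thesis using Suc.IH[OF a1, of 0] an esym_Suc_Suc[of a n 0] by (simp add: algebra_simps)
  next
    case (Suc j)
    have IH: "(real (Suc j) + 1) * esym a n (Suc (Suc j)) \<le> M * (real n - real (Suc j)) * esym a n (Suc j)"
             "(real j + 1) * esym a n (Suc j) \<le> M * (real n - real j) * esym a n j"
      using Suc.IH[OF a1] by blast+
    have "a (Suc n) * ((real j + 1) * esym a n (Suc j)) \<le> a (Suc n) * (M * (real n - real j) * esym a n j)"
      using IH(2) an by (intro mult_left_mono) auto
    moreover have "a (Suc n) * esym a n (Suc j) \<le> M * esym a n (Suc j)"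
      using mult_right_mono[OF an(2) nonneg[of "Suc j"]] .
    ultimately show ?thesis
      using IH(1) unfolding Suc esym_Suc_Suc of_nat_Suc by (simp add: algebra_simps)
  qed
qed

lemma binomial_Suc_bounds:
  assumes "k \<le> n" "k' = k \<or> k' = Suc k"
  shows "n choose k \<le> Suc n choose k'" "Suc n choose k' \<le> Suc n * (n choose k)"
proof -
  have "n choose k \<le> Suc n choose k' \<and> Suc n choose k' \<le> Suc n * (n choose k)"
  proof (cases "k' = k")
    case True
    have "(Suc n - k) * (Suc n choose k) = Suc n * (n choose k)"
      using binomial_absorb_comp[of "Suc n" k] by simp
    moreover have "1 \<le> Suc n - k" using assms(1) by simp
    ultimately have "Suc n choose k \<le> Suc n * (n choose k)"
      by (metis mult_1 mult_le_mono1)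
    then show ?thesis using True by (simp add: binomial_right_mono)
  next
    case False
    then have "k' = Suc k" using assms(2) by simp
    moreover have "Suc n choose Suc k \<le> Suc k * (Suc n choose Suc k)" by simp
    then have "Suc n choose Suc k \<le> Suc n * (n choose k)" by (simp only: Suc_times_binomial)
    ultimately show ?thesis by simp
  qed
  then show "n choose k \<le> Suc n choose k'" "Suc n choose k' \<le> Suc n * (n choose k)" by auto
qed

lemma esym_Suc_bounds:
  assumes a: "\<And>i. i \<in> {1..Suc n} \<Longrightarrow> 1 \<le> a i" "\<And>i. i \<in> {1..Suc n} \<Longrightarrow> a i \<le> M"
    and k: "1 \<le> k" "k \<le> n" "k' = k \<or> k' = Suc k"
  shows "esym a n k \<le> esym a (Suc n) k'" "esym a (Suc n) k' \<le> (real n + 1) * (M + 1) * esym a n k"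
proof -
  have an: "1 \<le> a (Suc n)" "a (Suc n) \<le> M" using a by auto
  have a1: "\<And>i. i \<in> {1..n} \<Longrightarrow> 1 \<le> a i" "\<And>i. i \<in> {1..n} \<Longrightarrow> a i \<le> M" using a by auto
  then have nonneg: "\<And>j. 0 \<le> esym a n j" by (intro esym_nonneg) (meson order.trans zero_le_one)
  have Me: "0 \<le> M * esym a n k" using an nonneg[of k] by simp
  have "esym a n k \<le> esym a (Suc n) k' \<and> esym a (Suc n) k' \<le> (1 + M * (real n + 1)) * esym a n k"
  proof (cases "k' = k")
    case True
    obtain j where j: "k = Suc j" using k(1) by (cases k) auto
    have "esym a n j \<le> (real n - real j) * esym a n j"
      using k j nonneg[of j] by (intro mult_le_cancel_right1[THEN iffD2]) auto
    also have "\<dots> \<le> (real j + 1) * esym a n k"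
      unfolding j by (rule esym_step_lower[OF a1(1)])
    also have "\<dots> \<le> real n * esym a n k"
      using k j nonneg[of k] by (intro mult_right_mono) auto
    finally have "a (Suc n) * esym a n j \<le> M * (real n * esym a n k)"
      using an nonneg[of j] by (intro mult_mono) auto
    then show ?thesis
      using an nonneg[of j] Me unfolding True j esym_Suc_Suc by (simp add: algebra_simps)
  next
    case False
    then have k': "k' = Suc k" using k(3) by simp
    have "esym a n (Suc k) \<le> (real k + 1) * esym a n (Suc k)"
      using nonneg[of "Suc k"] by (simp add: algebra_simps)
    also have "\<dots> \<le> M * (real n - real k) * esym a n k" by (rule esym_step_upper[OF a1])
    also have "\<dots> \<le> M * real n * esym a n k"
      using an nonneg[of k] by (intro mult_right_mono mult_left_mono) auto
    finally have "esym a n (Suc k) \<le> M * real n * esym a n k" .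
    moreover have "esym a n k \<le> a (Suc n) * esym a n k" "a (Suc n) * esym a n k \<le> M * esym a n k"
      using an nonneg[of k] by (simp_all add: mult_le_cancel_right1 mult_right_mono)
    ultimately show ?thesis
      using nonneg[of "Suc k"] nonneg[of k] unfolding k' esym_Suc_Suc by (simp add: algebra_simps)
  qed
  moreover have "(1 + M * (real n + 1)) * esym a n k \<le> (real n + 1) * (M + 1) * esym a n k"
    using an nonneg[of k] by (intro mult_right_mono) (auto simp: algebra_simps)
  ultimately show "esym a n k \<le> esym a (Suc n) k'"
    and "esym a (Suc n) k' \<le> (real n + 1) * (M + 1) * esym a n k" by auto
qed

definition esym_avg :: "(nat \<Rightarrow> real) \<Rightarrow> nat \<Rightarrow> nat \<Rightarrow> real" where
  "esym_avg a n k = esym a n k / real (n choose k)"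

lemma one_le_esym_avg:
  assumes "\<And>i. i \<in> {1..n} \<Longrightarrow> 1 \<le> a i" "k \<le> n"
  shows "1 \<le> esym_avg a n k"
proof -
  have "real (n choose k) \<le> esym a n k" by (rule binomial_le_esym) (use assms in auto)
  then show ?thesis using assms(2) by (simp add: esym_avg_def)
qed

lemma esym_avg_le_power:
  assumes "\<And>i. i \<in> {1..n} \<Longrightarrow> 1 \<le> a i" "k \<le> n" "(\<Prod>i\<in>{1..n}. a i) \<le> B ^ n"
  shows "esym_avg a n k \<le> (2 * B) ^ n"
proof -
  have nonneg: "\<And>i. i \<in> {1..n} \<Longrightarrow> 0 \<le> a i" using assms(1) by (meson order.trans zero_le_one)
  have "esym_avg a n k \<le> esym a n k / 1"
    using assms(2) esym_nonneg[OF nonneg] unfolding esym_avg_def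
    by (intro divide_left_mono) (auto simp: Suc_leI)
  also have "\<dots> = esym a n k" by simp
  also have "\<dots> \<le> (\<Prod>i\<in>{1..n}. 1 + a i)" by (rule esym_le_prod_one_plus[OF nonneg])
  also have "\<dots> \<le> (\<Prod>i\<in>{1..n}. 2 * a i)" using assms(1) nonneg by (intro prod_mono) auto
  also have "\<dots> = 2 ^ n * (\<Prod>i\<in>{1..n}. a i)" by (simp add: prod.distrib)
  also have "\<dots> \<le> (2 * B) ^ n" using assms(3) by (simp add: power_mult_distrib)
  finally show ?thesis .
qed

lemma abs_ln_esym_avg_Suc_le:
  assumes a: "\<And>i. i \<in> {1..Suc n} \<Longrightarrow> 1 \<le> a i" "\<And>i. i \<in> {1..Suc n} \<Longrightarrow> a i \<le> M"
    and k: "1 \<le> k" "k \<le> n" "k' = k \<or> k' = Suc k"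
  shows "\<bar>ln (esym_avg a (Suc n) k') - ln (esym_avg a n k)\<bar> \<le> ln ((real n + 1) * (M + 1))"
proof -
  define C C' e e' where "C = real (n choose k)" and "C' = real (Suc n choose k')"
    and "e = esym a n k" and "e' = esym a (Suc n) k'"
  have M: "1 \<le> M" using a by force
  have "real (Suc n choose k') \<le> real (Suc n * (n choose k))"
    using binomial_Suc_bounds(2)[OF k(2,3)] by (simp only: of_nat_le_iff)
  then have C: "1 \<le> C" "C \<le> C'" "C' \<le> (real n + 1) * C"
    using binomial_Suc_bounds(1)[OF k(2,3)] k(2) unfolding C_def C'_def by (auto simp: Suc_leI algebra_simps)
  have e: "C \<le> e" "e \<le> e'" "e' \<le> (real n + 1) * (M + 1) * e"
    using binomial_le_esym[of n a k] esym_Suc_bounds[OF a k] a unfolding C_def e_def e'_def by auto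
  have "ln (e / C) - ln (real n + 1) = ln (e / ((real n + 1) * C))"
    using C e by (simp add: ln_div ln_mult)
  also have "\<dots> \<le> ln (e' / C')" using C e by (intro ln_mono frac_le) (auto simp: mult_pos_pos)
  moreover have "ln ((real n + 1) * (M + 1)) = ln (real n + 1) + ln (M + 1)" "0 \<le> ln (M + 1)"
    using M by (simp_all add: ln_mult)
  ultimately have lower: "ln (e / C) - ln ((real n + 1) * (M + 1)) \<le> ln (e' / C')"
    by linarith
  have "ln (e' / C') \<le> ln ((real n + 1) * (M + 1) * e / C)"
    using C e M by (intro ln_mono frac_le) auto
  also have "\<dots> = ln ((real n + 1) * (M + 1)) + ln (e / C)" using C e M by (simp add: ln_mult ln_div)
  finally show ?thesis using lower unfolding esym_avg_def C_def C'_def e_def e'_def by linarith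
qed

section \<open>The deterministic estimate\<close>

lemma abs_exp_diff_le:
  fixes x y L :: real
  assumes "x \<le> L" "y \<le> L"
  shows "\<bar>exp x - exp y\<bar> \<le> exp L * \<bar>x - y\<bar>"
proof -
  have *: "exp u - exp v \<le> exp L * (u - v)" if "v \<le> u" "u \<le> L" for u v :: real
  proof -
    have "exp u * (1 + (v - u)) \<le> exp u * exp (v - u)"
      by (intro mult_left_mono exp_ge_add_one_self) auto
    then have "exp u - exp v \<le> exp u * (u - v)" by (simp add: algebra_simps flip: exp_add)
    also have "\<dots> \<le> exp L * (u - v)" using that by (intro mult_right_mono) auto
    finally show ?thesis .
  qed
  show ?thesis using *[of y x] *[of x y] assms by (cases "y \<le> x") (auto simp: abs_if)
qed

lemma abs_divide_diff_le:
  fixes s s' k k' \<Lambda> Q :: real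
  assumes k: "0 < k" "k \<le> k'" "k' \<le> k + 1"
    and s: "0 \<le> s / k" "s / k \<le> \<Lambda>" "\<bar>s' - s\<bar> \<le> Q"
  shows "\<bar>s' / k' - s / k\<bar> \<le> (Q + \<Lambda>) / k'"
proof -
  have "0 \<le> (k' - k) * (s / k)" using k s by (intro mult_nonneg_nonneg) simp_all
  moreover have "(k' - k) * (s / k) \<le> 1 * \<Lambda>" using k s by (intro mult_mono) simp_all
  ultimately have "\<bar>s' - s - (k' - k) * (s / k)\<bar> \<le> Q + \<Lambda>"
    using abs_triangle_ineq4[of "s' - s" "(k' - k) * (s / k)"] s(3) by linarith
  moreover have "s' / k' - s / k = (s' - s - (k' - k) * (s / k)) / k'"
    using k by (simp add: field_simps)
  ultimately show ?thesis using k by (simp add: divide_right_mono)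
qed

lemma nat_ceiling_mult_bounds:
  fixes c :: real
  assumes "0 < c" "c \<le> 1" "1 \<le> n"
  defines "k \<equiv> nat \<lceil>c * real n\<rceil>"
  shows "1 \<le> k" "k \<le> n" "c * real n \<le> real k"
proof -
  have "0 < c * real n" "c * real n \<le> real n" using assms by auto
  then have "1 \<le> \<lceil>c * real n\<rceil>" "\<lceil>c * real n\<rceil> \<le> int n"
    by (simp_all add: zero_less_ceiling ceiling_le_iff)
  moreover have "c * real n \<le> real_of_int \<lceil>c * real n\<rceil>" by (rule le_of_int_ceiling)
  ultimately show "1 \<le> k" "k \<le> n" "c * real n \<le> real k" unfolding k_def by linarith+
qed

lemma nat_ceiling_mult_Suc:
  fixes c :: real
  assumes "0 \<le> c" "c \<le> 1"
  defines "k \<equiv> \<lambda>n. nat \<lceil>c * real n\<rceil>"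
  shows "k (Suc n) = k n \<or> k (Suc n) = Suc (k n)"
proof -
  have "0 \<le> c * real n" using assms by simp
  then have "0 \<le> \<lceil>c * real n\<rceil>" by simp
  moreover have "\<lceil>c * real n\<rceil> \<le> \<lceil>c * real (Suc n)\<rceil>"
    using assms by (intro ceiling_mono mult_left_mono) auto
  moreover have "\<lceil>c * real (Suc n)\<rceil> \<le> \<lceil>c * real n + 1\<rceil>"
    using assms by (intro ceiling_mono) (auto simp: algebra_simps)
  ultimately show ?thesis unfolding k_def ceiling_add_one by linarith
qed

lemma ln_esym_avg_ceiling_bounds:
  fixes c B :: real
  assumes c: "0 < c" "c \<le> 1" and n: "1 \<le> n"
    and a: "\<And>i. i \<in> {1..n} \<Longrightarrow> 1 \<le> a i" and prod: "(\<Prod>i\<in>{1..n}. a i) \<le> B ^ n" and B: "1 \<le> B"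
  defines "k \<equiv> nat \<lceil>c * real n\<rceil>"
  shows "0 \<le> ln (esym_avg a n k) / real k" "ln (esym_avg a n k) / real k \<le> ln (2 * B) / c"
proof -
  note k = nat_ceiling_mult_bounds[OF c n, folded k_def]
  have S: "1 \<le> esym_avg a n k" "esym_avg a n k \<le> (2 * B) ^ n"
    using one_le_esym_avg[OF a k(2)] esym_avg_le_power[OF a k(2) prod] by auto
  then show "0 \<le> ln (esym_avg a n k) / real k" by simp
  have "ln (esym_avg a n k) \<le> real n * ln (2 * B)"
    using S B by (simp flip: ln_realpow)
  then have "ln (esym_avg a n k) / real k \<le> real n * ln (2 * B) / real k"
    using k by (intro divide_right_mono) auto
  also have "\<dots> \<le> real n * ln (2 * B) / (c * real n)"
    using k c n B by (intro divide_left_mono) auto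
  also have "\<dots> = ln (2 * B) / c" using n by simp
  finally show "ln (esym_avg a n k) / real k \<le> ln (2 * B) / c" .
qed

lemma abs_root_esym_avg_Suc_diff_le:
  fixes c B M :: real
  assumes c: "0 < c" "c \<le> 1" and n: "1 \<le> n"
    and a: "\<And>i. i \<in> {1..Suc n} \<Longrightarrow> 1 \<le> a i" "\<And>i. i \<in> {1..Suc n} \<Longrightarrow> a i \<le> M"
    and prod: "(\<Prod>i\<in>{1..n}. a i) \<le> B ^ n" "(\<Prod>i\<in>{1..Suc n}. a i) \<le> B ^ Suc n" and B: "1 \<le> B"
  defines "k \<equiv> \<lambda>m. nat \<lceil>c * real m\<rceil>" and "\<Lambda> \<equiv> ln (2 * B) / c"
  shows "\<bar>root (k n) (esym_avg a n (k n)) - root (k (Suc n)) (esym_avg a (Suc n) (k (Suc n)))\<bar>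
           \<le> exp \<Lambda> * ((ln ((real n + 1) * (M + 1)) + \<Lambda>) / (c * real n))"
proof -
  define L where "L = (\<lambda>m. ln (esym_avg a m (k m)) / real (k m))"
  have an: "\<And>i. i \<in> {1..n} \<Longrightarrow> 1 \<le> a i" using a(1) by auto
  have L: "0 \<le> L n" "L n \<le> \<Lambda>" "0 \<le> L (Suc n)" "L (Suc n) \<le> \<Lambda>"
    using ln_esym_avg_ceiling_bounds[OF c n an prod(1) B] ln_esym_avg_ceiling_bounds[OF c _ a(1) prod(2) B]
    unfolding L_def k_def \<Lambda>_def by auto
  have k: "1 \<le> k n" "k n \<le> n" "c * real n \<le> real (k n)" "k (Suc n) = k n \<or> k (Suc n) = Suc (k n)"
    using nat_ceiling_mult_bounds[OF c n] nat_ceiling_mult_Suc[of c n] c unfolding k_def by auto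
  have root_eq: "root (k m) (esym_avg a m (k m)) = exp (L m)" if "m \<in> {n, Suc n}" for m
  proof -
    have "0 < k m" "k m \<le> m" using that k by auto
    moreover have "1 \<le> esym_avg a m (k m)"
      using that \<open>k m \<le> m\<close> a(1) by (intro one_le_esym_avg) auto
    ultimately show ?thesis unfolding L_def by (simp add: root_powr_inverse powr_def field_simps)
  qed
  have "\<bar>ln (esym_avg a (Suc n) (k (Suc n))) - ln (esym_avg a n (k n))\<bar> \<le> ln ((real n + 1) * (M + 1))"
    using abs_ln_esym_avg_Suc_le[OF a k(1,2,4)] .
  then have "\<bar>L (Suc n) - L n\<bar> \<le> (ln ((real n + 1) * (M + 1)) + \<Lambda>) / real (k (Suc n))"
    unfolding L_def using k L(1,2) unfolding L_def by (intro abs_divide_diff_le) auto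
  also have "\<dots> \<le> (ln ((real n + 1) * (M + 1)) + \<Lambda>) / (c * real n)"
  proof (rule divide_left_mono)
    have "1 \<le> M" using a by force
    then have "1 \<le> (real n + 1) * (M + 1)" by (intro mult_ge1_I) auto
    then show "0 \<le> ln ((real n + 1) * (M + 1)) + \<Lambda>" using L by simp
  qed (use k c n in auto)
  finally have "\<bar>L n - L (Suc n)\<bar> \<le> (ln ((real n + 1) * (M + 1)) + \<Lambda>) / (c * real n)"
    by (simp only: abs_minus_commute)
  then have "exp \<Lambda> * \<bar>L n - L (Suc n)\<bar> \<le> exp \<Lambda> * ((ln ((real n + 1) * (M + 1)) + \<Lambda>) / (c * real n))"
    by (rule mult_left_mono) simp
  then show ?thesis
    unfolding root_eq[of n, simplified] root_eq[of "Suc n", simplified]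
    by (rule order_trans[OF abs_exp_diff_le[OF L(2,4)]])
qed

theorem root_esym_avg_diff_bigo:
  fixes a :: "nat \<Rightarrow> real" and c C B :: real
  assumes c: "0 < c" "c \<le> 1"
    and a: "\<And>i. 1 \<le> i \<Longrightarrow> 1 \<le> a i" "\<And>i. 1 \<le> i \<Longrightarrow> a i \<le> C * real i ^ 2"
    and prod: "eventually (\<lambda>n. (\<Prod>i\<in>{1..n}. a i) \<le> B ^ n) sequentially" and B: "1 \<le> B"
  defines "T \<equiv> \<lambda>n. root (nat \<lceil>c * real n\<rceil>) (esym_avg a n (nat \<lceil>c * real n\<rceil>))"
  shows "(\<lambda>n. \<bar>T n - T (Suc n)\<bar>) \<in> O(\<lambda>n. ln (real n) / real n)"
proof -
  define \<Lambda> where "\<Lambda> = ln (2 * B) / c"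
  define bound where
    "bound n = exp \<Lambda> * ((ln ((real n + 1) * (C * (real n + 1) ^ 2 + 1)) + \<Lambda>) / (c * real n))" for n
  have "0 < C" using a[of 1] by simp
  have "eventually (\<lambda>n. \<bar>T n - T (Suc n)\<bar> \<le> bound n) sequentially"
    using prod eventually_sequentially_Suc[THEN iffD2, OF prod] eventually_ge_at_top[of 1]
  proof eventually_elim
    case (elim n)
    have "a i \<le> C * (real n + 1) ^ 2" if "i \<in> {1..Suc n}" for i
    proof -
      have "real i ^ 2 \<le> (real n + 1) ^ 2" using that by (intro power_mono) auto
      then show ?thesis using a(2)[of i] that \<open>0 < C\<close> by (smt (verit) mult_left_mono atLeastAtMost_iff)
    qed
    then show ?case
      using abs_root_esym_avg_Suc_diff_le[OF c elim(3) _ _ elim(1,2) B, of "C * (real n + 1) ^ 2"] a(1)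
      unfolding T_def bound_def \<Lambda>_def by simp
  qed
  then have "(\<lambda>n. \<bar>T n - T (Suc n)\<bar>) \<in> O(bound)"
    by (intro bigoI[where c = 1]) (auto elim!: eventually_mono)
  also have "bound \<in> O(\<lambda>n. ln (real n) / real n)"
    unfolding bound_def using \<open>0 < C\<close> c by real_asymp
  finally show ?thesis .
qed

lemma tendsto_0_if_bigo_ln_over_n:
  fixes f :: "nat \<Rightarrow> real"
  assumes "f \<in> O(\<lambda>n. ln (real n) / real n)"
  shows "f \<longlonglongrightarrow> 0"
proof -
  have "(\<lambda>n. ln (real n) / real n) \<in> o(\<lambda>_. 1)" by real_asymp
  then have "f \<in> o(\<lambda>_. 1)" by (rule landau_o.big_small_trans[OF assms])
  then show ?thesis using smalloD_tendsto by fastforce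
qed

section \<open>The Gauss measure\<close>

text \<open>Integration against the Gauss measure without its normalising factor \<open>1 / ln 2\<close>.\<close>

definition gauss_integral :: "(real \<Rightarrow> ennreal) \<Rightarrow> ennreal" where
  "gauss_integral h = (\<integral>\<^sup>+x. h x * ennreal (1 / (1 + x)) * indicator {0<..<1} x \<partial>lborel)"

text \<open>
  The density \<open>(1 + x)\<^sup>-\<^sup>1 |dx/dy|\<close> at \<open>x = 1/(m + 1 + y)\<close>, the inverse branch of the Gauss map
  on which the first digit is \<open>m + 1\<close>.
\<close>

definition digit_weight :: "nat \<Rightarrow> real \<Rightarrow> real" where
  "digit_weight m y = 1 / ((real m + 1 + y) * (real m + 2 + y))"

lemma gauss_map_measurable [measurable]: "gauss_map \<in> borel_measurable borel"
  unfolding gauss_map_def frac_def by measurable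

lemma cf_digit_measurable [measurable]: "(\<lambda>x. cf_digit x i) \<in> borel \<rightarrow>\<^sub>M count_space UNIV"
  unfolding cf_digit_def by measurable

lemma gauss_integral_atLeastAtMost:
  "(\<integral>\<^sup>+y. h y * ennreal (1 / (1 + y)) * indicator {0..1} y \<partial>lborel) = gauss_integral h"
  unfolding gauss_integral_def
  by (rule nn_integral_cong_AE)
     (use AE_lborel_singleton[of 0] AE_lborel_singleton[of 1] in \<open>eventually_elim, auto simp: indicator_def\<close>)

lemma nn_integral_inverse_branch:
  fixes b :: real and H :: "real \<Rightarrow> ennreal"
  assumes b: "1 \<le> b" and H[measurable]: "H \<in> borel_measurable borel"
  shows "(\<integral>\<^sup>+x. H x * indicator {1/(b+1)..1/b} x \<partial>lborel) =
         (\<integral>\<^sup>+y. H (1/(b+y)) * ennreal (1/(b+y)^2) * indicator {0..1} y \<partial>lborel)"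
proof -
  define g g' where "g = (\<lambda>t::real. 1 / (b + 1 - t))" and "g' = (\<lambda>t::real. 1 / (b + 1 - t)^2)"
  have "(g has_real_derivative g' t) (at t)" if "t \<in> {0..1}" for t
  proof -
    have "b + 1 - t \<noteq> 0" using that b by auto
    then show ?thesis unfolding g_def g'_def
      by (auto intro!: derivative_eq_intros simp: power2_eq_square)
  qed
  moreover have "continuous_on {0..1} g'"
    unfolding g'_def by (intro continuous_intros) (use b in auto)
  ultimately have "(\<integral>\<^sup>+x. H x * indicator {g 0..g 1} x \<partial>lborel) =
      (\<integral>\<^sup>+x. H (g x) * g' x * indicator {0..1} x \<partial>lborel)"
    by (intro nn_integral_substitution_aux[OF H]) (auto simp: g'_def)
  also have "\<dots> = ennreal \<bar>-1\<bar> *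
      (\<integral>\<^sup>+y. (\<lambda>x. H (g x) * g' x * indicator {0..1} x) (1 + (-1) * y) \<partial>lborel)"
    unfolding g_def g'_def by (rule nn_integral_real_affine) auto
  also have "\<dots> = (\<integral>\<^sup>+y. H (1/(b+y)) * ennreal (1/(b+y)^2) * indicator {0..1} y \<partial>lborel)"
    unfolding g_def g'_def abs_minus_cancel abs_one ennreal_1 mult_1
    by (intro nn_integral_cong) (auto simp: indicator_def)
  finally show ?thesis unfolding g_def by simp
qed

lemma inverse_branch_simps:
  fixes y :: real
  assumes "0 < y" "y < 1"
  shows "nat \<lfloor>1 / (1 / (real m + 1 + y))\<rfloor> = Suc m" "gauss_map (1 / (real m + 1 + y)) = y"
    "1 / (1 + 1 / (real m + 1 + y)) * (1 / (real m + 1 + y)^2) = digit_weight m y"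
proof -
  have "\<lfloor>real m + 1 + y\<rfloor> = int (Suc m)" using assms by (intro floor_unique) auto
  then show "nat \<lfloor>1 / (1 / (real m + 1 + y))\<rfloor> = Suc m" "gauss_map (1 / (real m + 1 + y)) = y"
    using assms by (simp_all add: gauss_map_def frac_def)
  have "1 / (1 + 1 / B) * (1 / B^2) = 1 / (B * (B + 1))" if "0 < B" for B :: real
  proof -
    have "B \<noteq> 0" "B + 1 \<noteq> 0" using that by auto
    then show ?thesis by (simp add: divide_simps power2_eq_square)
  qed
  from this[of "real m + 1 + y"]
  show "1 / (1 + 1 / (real m + 1 + y)) * (1 / (real m + 1 + y)^2) = digit_weight m y"
    using assms unfolding digit_weight_def by (simp add: add_ac)
qed

lemma nn_integral_digit_branch:
  assumes [measurable]: "h \<in> borel_measurable borel"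
  shows "(\<integral>\<^sup>+x. g (nat \<lfloor>1/x\<rfloor>) * h (gauss_map x) * ennreal (1 / (1 + x))
              * indicator {1/(real m + 2)<..1/(real m + 1)} x \<partial>lborel) =
         (\<integral>\<^sup>+y. g (Suc m) * h y * ennreal (digit_weight m y) * indicator {0..1} y \<partial>lborel)"
    (is "(\<integral>\<^sup>+x. ?F x * _ \<partial>lborel) = _")
proof -
  define b where "b = real m + 1"
  have "(\<integral>\<^sup>+x. ?F x * indicator {1/(real m + 2)<..1/(real m + 1)} x \<partial>lborel) =
        (\<integral>\<^sup>+x. ?F x * indicator {1/(b+1)..1/b} x \<partial>lborel)"
    by (rule nn_integral_cong_AE)
       (use AE_lborel_singleton[of "1/(b+1)"] in \<open>eventually_elim, auto simp: indicator_def b_def add.assoc\<close>)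
  also have "\<dots> = (\<integral>\<^sup>+y. ?F (1/(b+y)) * ennreal (1/(b+y)^2) * indicator {0..1} y \<partial>lborel)"
    by (rule nn_integral_inverse_branch) (auto simp: b_def)
  also have "\<dots> = (\<integral>\<^sup>+y. g (Suc m) * h y * ennreal (digit_weight m y) * indicator {0..1} y \<partial>lborel)"
  proof (rule nn_integral_cong_AE)
    have "AE y in lborel. y \<noteq> 0 \<and> y \<noteq> 1"
      using AE_lborel_singleton[of 0] AE_lborel_singleton[of 1] by eventually_elim auto
    then show "AE y in lborel. ?F (1/(b+y)) * ennreal (1/(b+y)^2) * indicator {0..1} y =
                 g (Suc m) * h y * ennreal (digit_weight m y) * indicator {0..1} y"
    proof eventually_elim
      case (elim y)
      show ?case
      proof (cases "y \<in> {0..1}")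
        case True
        then have y: "0 < y" "y < 1" using elim by auto
        have "ennreal (1 / (1 + 1/(b+y))) * ennreal (1/(b+y)^2) = ennreal (1 / (1 + 1/(b+y)) * (1/(b+y)^2))"
          by (rule ennreal_mult[symmetric]) (use y in \<open>auto simp: b_def\<close>)
        also have "\<dots> = ennreal (digit_weight m y)"
          by (simp only: b_def inverse_branch_simps(3)[OF y])
        finally have "ennreal (1 / (1 + 1/(b+y))) * ennreal (1/(b+y)^2) = ennreal (digit_weight m y)" .
        then show ?thesis using inverse_branch_simps(1,2)[OF y, of m] True
          by (simp add: b_def add_ac mult.assoc)
      qed simp
    qed
  qed
  finally show ?thesis .
qed

lemma disjoint_family_digit_branches:
  "disjoint_family (\<lambda>m::nat. {1/(real m + 2)<..1/(real m + 1)})"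
proof -
  have "{1/(real m + 2)<..1/(real m + 1)} \<inter> {1/(real n + 2)<..1/(real n + 1)} = {}" if "m < n" for m n :: nat
  proof -
    have "1/(real n + 1) \<le> 1/(real m + 2)" using that by (intro divide_left_mono) auto
    then show ?thesis by auto
  qed
  then show ?thesis unfolding disjoint_family_on_def by (metis Int_commute linorder_neqE_nat)
qed

lemma mem_digit_branch:
  fixes x :: real
  assumes "x \<in> {0<..<1}"
  shows "x \<in> {1/(real (nat \<lfloor>1/x\<rfloor> - 1) + 2)<..1/(real (nat \<lfloor>1/x\<rfloor> - 1) + 1)}"
proof -
  define j where "j = \<lfloor>1/x\<rfloor>"
  have x: "0 < x" "x < 1" using assms by auto
  then have "1 < 1/x" by (simp add: less_divide_eq)
  then have j: "1 \<le> j" "real_of_int j \<le> 1/x" "1/x < real_of_int j + 1" unfolding j_def by linarith+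
  then have "real (nat j - 1) + 1 = real_of_int j" by (simp add: of_nat_diff)
  moreover have "x \<le> 1 / real_of_int j" "1 / (real_of_int j + 1) < x"
    using j x by (simp_all add: le_divide_eq divide_less_eq mult.commute)
  ultimately show ?thesis unfolding j_def[symmetric] by (simp add: add.assoc[symmetric] add.commute)
qed

lemma nn_integral_digit_gauss_map_le:
  assumes [measurable]: "h \<in> borel_measurable borel"
  shows "gauss_integral (\<lambda>x. g (nat \<lfloor>1/x\<rfloor>) * h (gauss_map x)) \<le>
         (\<integral>\<^sup>+y. h y * (\<Sum>m. g (Suc m) * ennreal (digit_weight m y)) * indicator {0..1} y \<partial>lborel)"
proof -
  define A where "A = (\<lambda>m::nat. {1/(real m + 2)<..1/(real m + 1)})"
  define F where "F = (\<lambda>x. g (nat \<lfloor>1/x\<rfloor>) * h (gauss_map x) * ennreal (1 / (1 + x)))"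
  have "F x * indicator {0<..<1} x \<le> (\<Sum>m. F x * indicator (A m) x)" for x
  proof (cases "x \<in> {0<..<1}")
    case True
    then have "x \<in> A (nat \<lfloor>1/x\<rfloor> - 1)" unfolding A_def by (rule mem_digit_branch)
    then have "(\<Sum>m. F x * indicator (A m) x) = F x"
      by (rule suminf_cmult_indicator[OF disjoint_family_digit_branches[folded A_def]])
    then show ?thesis using True by simp
  qed simp
  then have "gauss_integral (\<lambda>x. g (nat \<lfloor>1/x\<rfloor>) * h (gauss_map x)) \<le>
      (\<integral>\<^sup>+x. (\<Sum>m. F x * indicator (A m) x) \<partial>lborel)"
    unfolding gauss_integral_def F_def by (intro nn_integral_mono)
  also have "\<dots> = (\<Sum>m. \<integral>\<^sup>+x. F x * indicator (A m) x \<partial>lborel)"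
    by (rule nn_integral_suminf) (simp add: A_def F_def)
  also have "\<dots> = (\<Sum>m. \<integral>\<^sup>+y. g (Suc m) * h y * ennreal (digit_weight m y) * indicator {0..1} y \<partial>lborel)"
    unfolding A_def F_def by (intro suminf_cong nn_integral_digit_branch) simp
  also have "\<dots> = (\<integral>\<^sup>+y. (\<Sum>m. (h y * indicator {0..1} y) * (g (Suc m) * ennreal (digit_weight m y))) \<partial>lborel)"
    by (subst nn_integral_suminf) (simp_all add: mult_ac digit_weight_def)
  also have "\<dots> = (\<integral>\<^sup>+y. h y * (\<Sum>m. g (Suc m) * ennreal (digit_weight m y)) * indicator {0..1} y \<partial>lborel)"
    by (subst ennreal_suminf_cmult) (simp add: mult_ac)
  finally show ?thesis .
qed

lemma digit_weight_sums:
  assumes "0 \<le> y"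
  shows "(\<lambda>m. digit_weight m y) sums (1 / (1 + y))"
proof -
  have "(\<lambda>m. 1 / (real m + 1 + y)) \<longlonglongrightarrow> 0" by real_asymp
  from telescope_sums'[OF this]
  have "(\<lambda>m. 1 / (real m + 1 + y) - 1 / (real (Suc m) + 1 + y)) sums (1 / (1 + y))"
    by (simp add: add_ac)
  moreover have "digit_weight m y = 1 / (real m + 1 + y) - 1 / (real (Suc m) + 1 + y)" for m
    using assms by (simp add: digit_weight_def field_simps)
  ultimately show ?thesis by simp
qed

lemma gauss_integral_gauss_map_le:
  assumes [measurable]: "h \<in> borel_measurable borel"
  shows "gauss_integral (\<lambda>x. h (gauss_map x)) \<le> gauss_integral h"
proof -
  have sums: "(\<Sum>m. ennreal (digit_weight m y)) = ennreal (1 / (1 + y))" if "0 \<le> y" for y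
    using that digit_weight_sums[OF that] by (intro suminf_ennreal_eq) (auto simp: digit_weight_def)
  have "gauss_integral (\<lambda>x. h (gauss_map x)) = gauss_integral (\<lambda>x. (\<lambda>_. 1) (nat \<lfloor>1/x\<rfloor>) * h (gauss_map x))"
    by simp
  also have "\<dots> \<le> (\<integral>\<^sup>+y. h y * (\<Sum>m. 1 * ennreal (digit_weight m y)) * indicator {0..1} y \<partial>lborel)"
    by (rule nn_integral_digit_gauss_map_le) simp
  also have "\<dots> = (\<integral>\<^sup>+y. h y * ennreal (1 / (1 + y)) * indicator {0..1} y \<partial>lborel)"
    by (intro nn_integral_cong) (auto simp: indicator_def sums)
  finally show ?thesis by (simp only: gauss_integral_atLeastAtMost)
qed

lemma gauss_integral_funpow_le:
  assumes [measurable]: "h \<in> borel_measurable borel"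
  shows "gauss_integral (\<lambda>x. h ((gauss_map ^^ j) x)) \<le> gauss_integral h"
proof (induction j)
  case (Suc j)
  have "gauss_integral (\<lambda>x. h ((gauss_map ^^ Suc j) x)) =
      gauss_integral (\<lambda>x. h ((gauss_map ^^ j) (gauss_map x)))"
    by (simp add: funpow_Suc_right del: funpow.simps)
  also have "\<dots> \<le> gauss_integral (\<lambda>x. h ((gauss_map ^^ j) x))"
    by (rule gauss_integral_gauss_map_le) simp
  finally show ?case using Suc.IH by simp
qed simp

definition zeta_3_2 :: real where
  "zeta_3_2 = (\<Sum>m. real (Suc m) powr (-3/2))"

lemma summable_zeta_3_2: "summable (\<lambda>m. real (Suc m) powr (-3/2))"
proof -
  have "summable (\<lambda>n. real n powr (-3/2))" by (subst summable_real_powr_iff) simp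
  then show ?thesis by (subst summable_Suc_iff)
qed

lemma one_le_zeta_3_2: "1 \<le> zeta_3_2"
  using sum_le_suminf[OF summable_zeta_3_2, of "{0}"] unfolding zeta_3_2_def by simp

lemma sqrt_digit_weight_le:
  assumes "0 \<le> y" "y \<le> 1"
  shows "sqrt (real (Suc m)) * digit_weight m y \<le> 2 / (1 + y) * real (Suc m) powr (-3/2)"
proof -
  define s where "s = real (Suc m)"
  have "s * s \<le> (real m + 1 + y) * (real m + 2 + y)"
    unfolding s_def using assms by (intro mult_mono) auto
  then have "digit_weight m y \<le> 1 / s^2"
    unfolding digit_weight_def power2_eq_square using assms by (intro divide_left_mono) (auto simp: s_def)
  then have "sqrt s * digit_weight m y \<le> sqrt s * (1 / s^2)"
    by (intro mult_left_mono) (auto simp: s_def)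
  also have "\<dots> = s powr (1/2) / s powr 2" by (simp add: powr_half_sqrt s_def)
  also have "\<dots> = s powr (-3/2)" by (simp add: powr_diff[symmetric])
  also have "\<dots> \<le> 2 / (1 + y) * s powr (-3/2)"
    using assms mult_right_mono[of 1 "2 / (1 + y)" "s powr (-3/2)"] by (simp add: le_divide_eq)
  finally show ?thesis unfolding s_def .
qed

lemma suminf_sqrt_digit_weight_le:
  assumes "0 \<le> y" "y \<le> 1"
  shows "(\<Sum>m. ennreal (sqrt (real (Suc m))) * ennreal (digit_weight m y)) \<le>
           ennreal (2 * zeta_3_2) * ennreal (1 / (1 + y))"
proof -
  have "(\<Sum>m. ennreal (sqrt (real (Suc m))) * ennreal (digit_weight m y)) =
        (\<Sum>m. ennreal (sqrt (real (Suc m)) * digit_weight m y))"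
    using assms by (intro suminf_cong) (subst ennreal_mult[symmetric], auto simp: digit_weight_def)
  also have "\<dots> \<le> (\<Sum>m. ennreal (2 / (1 + y) * real (Suc m) powr (-3/2)))"
    by (intro suminf_le summableI ennreal_leI sqrt_digit_weight_le assms)
  also have "\<dots> = ennreal (2 / (1 + y) * zeta_3_2)"
    unfolding zeta_3_2_def suminf_mult[OF summable_zeta_3_2, symmetric]
    using assms by (intro suminf_ennreal2 summable_mult summable_zeta_3_2) auto
  also have "\<dots> = ennreal (2 * zeta_3_2) * ennreal (1 / (1 + y))"
    using assms one_le_zeta_3_2 by (simp add: ennreal_mult[symmetric])
  finally show ?thesis .
qed

lemma gauss_integral_sqrt_digit_le:
  assumes [measurable]: "h \<in> borel_measurable borel"
  shows "gauss_integral (\<lambda>x. ennreal (sqrt (real (nat \<lfloor>1/x\<rfloor>))) * h (gauss_map x)) \<le>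
           ennreal (2 * zeta_3_2) * gauss_integral h"
proof -
  have "gauss_integral (\<lambda>x. ennreal (sqrt (real (nat \<lfloor>1/x\<rfloor>))) * h (gauss_map x)) \<le>
      (\<integral>\<^sup>+y. h y * (\<Sum>m. ennreal (sqrt (real (Suc m))) * ennreal (digit_weight m y))
             * indicator {0..1} y \<partial>lborel)"
    using nn_integral_digit_gauss_map_le[of h "\<lambda>j. ennreal (sqrt (real j))"] by simp
  also have "\<dots> \<le> (\<integral>\<^sup>+y. ennreal (2 * zeta_3_2) * (h y * ennreal (1 / (1 + y)) * indicator {0..1} y) \<partial>lborel)"
    using suminf_sqrt_digit_weight_le
    by (intro nn_integral_mono) (auto simp: indicator_def mult_ac intro: mult_left_mono)
  also have "\<dots> = ennreal (2 * zeta_3_2) * gauss_integral h"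
    by (simp add: nn_integral_cmult gauss_integral_atLeastAtMost)
  finally show ?thesis .
qed

lemma cf_digit_Suc: "cf_digit x (Suc i) = cf_digit (gauss_map x) i" if "1 \<le> i"
  using that by (cases i) (simp_all add: cf_digit_def funpow_Suc_right del: funpow.simps)

lemma prod_cf_digit_Suc:
  "(\<Prod>i\<in>{1..Suc n}. real (cf_digit x i)) = real (nat \<lfloor>1/x\<rfloor>) * (\<Prod>i\<in>{1..n}. real (cf_digit (gauss_map x) i))"
proof -
  have "(\<Prod>i\<in>{1..Suc n}. real (cf_digit x i)) =
      real (cf_digit x 1) * (\<Prod>i\<in>{Suc 1..Suc n}. real (cf_digit x i))"
    by (simp add: prod.atLeast_Suc_atMost)
  also have "(\<Prod>i\<in>{Suc 1..Suc n}. real (cf_digit x i)) = (\<Prod>i\<in>{1..n}. real (cf_digit (gauss_map x) i))"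
    unfolding prod.shift_bounds_cl_Suc_ivl by (intro prod.cong refl) (simp add: cf_digit_Suc)
  finally show ?thesis by (simp add: cf_digit_def)
qed

lemma gauss_integral_sqrt_prod_cf_digit_le:
  "gauss_integral (\<lambda>x. ennreal (sqrt (\<Prod>i\<in>{1..n}. real (cf_digit x i)))) \<le> ennreal ((2 * zeta_3_2) ^ n)"
proof (induction n)
  case 0
  have "gauss_integral (\<lambda>_. 1) \<le> (\<integral>\<^sup>+x. indicator {0<..<1::real} x \<partial>lborel)"
    unfolding gauss_integral_def by (intro nn_integral_mono) (auto simp: indicator_def intro: ennreal_leI)
  then show ?case by simp
next
  case (Suc n)
  have "gauss_integral (\<lambda>x. ennreal (sqrt (\<Prod>i\<in>{1..Suc n}. real (cf_digit x i)))) =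
        gauss_integral (\<lambda>x. ennreal (sqrt (real (nat \<lfloor>1/x\<rfloor>))) *
                             ennreal (sqrt (\<Prod>i\<in>{1..n}. real (cf_digit (gauss_map x) i))))"
    unfolding prod_cf_digit_Suc real_sqrt_mult by (simp add: ennreal_mult prod_nonneg)
  also have "\<dots> \<le> ennreal (2 * zeta_3_2) * gauss_integral (\<lambda>x. ennreal (sqrt (\<Prod>i\<in>{1..n}. real (cf_digit x i))))"
    by (rule gauss_integral_sqrt_digit_le) measurable
  also have "\<dots> \<le> ennreal (2 * zeta_3_2) * ennreal ((2 * zeta_3_2) ^ n)"
    by (intro mult_left_mono Suc.IH) simp
  also have "\<dots> = ennreal ((2 * zeta_3_2) ^ Suc n)"
    using one_le_zeta_3_2 by (simp add: ennreal_mult[symmetric])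
  finally show ?case .
qed

lemma gauss_integral_markov:
  fixes f :: "real \<Rightarrow> real" and t :: real
  assumes [measurable]: "f \<in> borel_measurable borel" and "0 < t"
  shows "gauss_integral (indicator {x. t < f x}) \<le> ennreal (1 / t) * gauss_integral (\<lambda>x. ennreal (f x))"
proof -
  have "indicator {x. t < f x} x \<le> ennreal (1 / t) * ennreal (f x)" for x
  proof (cases "t < f x")
    case True
    then have "ennreal 1 \<le> ennreal (1 / t * f x)"
      using \<open>0 < t\<close> by (intro ennreal_leI) (simp add: field_simps)
    also have "\<dots> = ennreal (1 / t) * ennreal (f x)" using True \<open>0 < t\<close> by (intro ennreal_mult) auto
    finally show ?thesis using True by simp
  qed simp
  then have "gauss_integral (indicator {x. t < f x}) \<le> gauss_integral (\<lambda>x. ennreal (1 / t) * ennreal (f x))"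
    unfolding gauss_integral_def by (intro nn_integral_mono mult_right_mono) auto
  also have "\<dots> = ennreal (1 / t) * gauss_integral (\<lambda>x. ennreal (f x))"
    unfolding gauss_integral_def by (simp add: nn_integral_cmult mult.assoc)
  finally show ?thesis .
qed

lemma emeasure_le_gauss_integral:
  assumes [measurable]: "E \<in> sets borel"
  shows "emeasure lborel (E \<inter> {0<..<1}) \<le> 2 * gauss_integral (indicator E)"
proof -
  have "indicator (E \<inter> {0<..<1}) x \<le> 2 * (indicator E x * ennreal (1 / (1 + x)) * indicator {0<..<1} x)"
    for x :: real
  proof (cases "x \<in> E \<inter> {0<..<1}")
    case True
    then have "ennreal 1 \<le> ennreal (2 * (1 / (1 + x)))"
      by (intro ennreal_leI) (simp add: le_divide_eq)
    also have "\<dots> = 2 * ennreal (1 / (1 + x))" using True by (subst ennreal_mult) auto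
    finally show ?thesis using True by simp
  qed simp
  then have "(\<integral>\<^sup>+x. indicator (E \<inter> {0<..<1}) x \<partial>lborel) \<le>
      (\<integral>\<^sup>+x. 2 * (indicator E x * ennreal (1 / (1 + x)) * indicator {0<..<1} x) \<partial>lborel)"
    by (rule nn_integral_mono)
  also have "\<dots> = 2 * gauss_integral (indicator E)"
    unfolding gauss_integral_def by (rule nn_integral_cmult) measurable
  finally show ?thesis by simp
qed

lemma gauss_integral_cf_digit_ge_le:
  assumes "1 \<le> m"
  shows "gauss_integral (indicator {x. m \<le> cf_digit x i}) \<le> ennreal (1 / real m)"
proof -
  define h :: "real \<Rightarrow> ennreal" where "h = indicator {y. m \<le> nat \<lfloor>1/y\<rfloor>}"
  have [measurable]: "h \<in> borel_measurable borel" unfolding h_def by measurable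
  have "gauss_integral (indicator {x. m \<le> cf_digit x i}) = gauss_integral (\<lambda>x. h ((gauss_map ^^ (i - 1)) x))"
    unfolding h_def cf_digit_def by (intro arg_cong[where f = gauss_integral] ext) (simp add: indicator_def)
  also have "\<dots> \<le> gauss_integral h" by (rule gauss_integral_funpow_le) simp
  also have "\<dots> \<le> (\<integral>\<^sup>+y. indicator {0..1/real m} y \<partial>lborel)"
    unfolding gauss_integral_def
  proof (intro nn_integral_mono)
    fix y :: real
    show "h y * ennreal (1 / (1 + y)) * indicator {0<..<1} y \<le> indicator {0..1/real m} y"
    proof (cases "y \<in> {0<..<1} \<and> m \<le> nat \<lfloor>1/y\<rfloor>")
      case True
      then have "m \<le> nat \<lfloor>1/y\<rfloor>" by simp
      then have "real m \<le> of_int \<lfloor>1/y\<rfloor>" using assms by linarith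
      also have "\<dots> \<le> 1/y" by simp
      finally have "real m \<le> 1/y" .
      then have "y \<le> 1/real m" using True assms by (simp add: le_divide_eq mult.commute)
      moreover have "ennreal (1 / (1 + y)) \<le> ennreal 1" using True by (intro ennreal_leI) simp
      ultimately show ?thesis using True unfolding h_def by simp
    qed (auto simp: h_def indicator_def)
  qed
  also have "\<dots> = ennreal (1 / real m)" by simp
  finally show ?thesis .
qed

section \<open>Almost every continued fraction\<close>

lemma AE_eventually_notin_if_summable:
  assumes [measurable]: "\<And>n. A n \<in> sets M"
    and le: "\<And>n. emeasure M (A n) \<le> ennreal (b n)" and "\<And>n. 0 \<le> b n" and "summable b"
  shows "AE x in M. eventually (\<lambda>n. x \<notin> A n) sequentially"
proof -
  have "measure M (A n) \<le> b n" for n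
    using le[of n] \<open>0 \<le> b n\<close> by (simp add: measure_def enn2real_leI)
  then have "summable (\<lambda>n. measure M (A n))"
    by (intro summable_comparison_test'[OF \<open>summable b\<close>]) auto
  moreover have "emeasure M (A n) < \<infinity>" for n using le[of n] by (simp add: le_less_trans)
  ultimately have "AE x in M. eventually (\<lambda>n. x \<in> space M - A n) sequentially"
    by (intro borel_cantelli_AE1) auto
  then show ?thesis by eventually_elim (auto elim: eventually_mono)
qed

lemma AE_eventually_cf_digit_le_square:
  "AE x in lborel. x \<in> {0<..<1} \<longrightarrow> eventually (\<lambda>n. cf_digit x n \<le> n^2) sequentially"
proof -
  define A where "A n = {x. n^2 + 1 \<le> cf_digit x n} \<inter> {0<..<1::real}" for n
  have "emeasure lborel (A n) \<le> ennreal (2 / (real n ^ 2 + 1))" for n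
  proof -
    have "emeasure lborel (A n) \<le> 2 * gauss_integral (indicator {x. n^2 + 1 \<le> cf_digit x n})"
      unfolding A_def by (rule emeasure_le_gauss_integral) measurable
    also have "\<dots> \<le> 2 * ennreal (1 / real (n^2 + 1))"
      by (intro mult_left_mono gauss_integral_cf_digit_ge_le) auto
    also have "\<dots> = ennreal (2 * (1 / real (n^2 + 1)))" by (subst ennreal_mult) auto
    finally show ?thesis by (simp add: add.commute)
  qed
  moreover have "summable (\<lambda>n. 2 / (real n ^ 2 + 1))"
  proof (rule summable_comparison_test')
    show "summable (\<lambda>n. 2 * inverse (real n ^ 2))"
      by (intro summable_mult inverse_power_summable) simp
    show "norm (2 / (real n ^ 2 + 1)) \<le> 2 * inverse (real n ^ 2)" if "1 \<le> n" for n
      using that by (simp add: inverse_eq_divide frac_le)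
  qed
  ultimately have "AE x in lborel. eventually (\<lambda>n. x \<notin> A n) sequentially"
    by (intro AE_eventually_notin_if_summable) (auto simp: A_def)
  then show ?thesis
  proof eventually_elim
    case (elim x)
    show ?case
      using eventually_mono[OF elim, of "\<lambda>n. cf_digit x n \<le> n^2"] by (auto simp: A_def)
  qed
qed

lemma AE_eventually_prod_cf_digit_le:
  "AE x in lborel. x \<in> {0<..<1} \<longrightarrow>
     eventually (\<lambda>n. (\<Prod>i\<in>{1..n}. real (cf_digit x i)) \<le> ((4 * zeta_3_2)^2) ^ n) sequentially"
proof -
  define B where "B = 4 * zeta_3_2"
  define P where "P n x = sqrt (\<Prod>i\<in>{1..n}. real (cf_digit x i))" for n x
  define A where "A n = {x. B ^ n < P n x} \<inter> {0<..<1::real}" for n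
  have [measurable]: "P n \<in> borel_measurable borel" for n unfolding P_def by measurable
  have B: "0 < B" using one_le_zeta_3_2 by (simp add: B_def)
  have "emeasure lborel (A n) \<le> ennreal (2 * (1/2) ^ n)" for n
  proof -
    have "emeasure lborel (A n) \<le> 2 * gauss_integral (indicator {x. B ^ n < P n x})"
      unfolding A_def by (rule emeasure_le_gauss_integral) measurable
    also have "\<dots> \<le> 2 * (ennreal (1 / B ^ n) * gauss_integral (\<lambda>x. ennreal (P n x)))"
      using B by (intro mult_left_mono gauss_integral_markov) auto
    also have "\<dots> \<le> 2 * (ennreal (1 / B ^ n) * ennreal ((2 * zeta_3_2) ^ n))"
      unfolding P_def by (intro mult_left_mono gauss_integral_sqrt_prod_cf_digit_le) auto
    also have "\<dots> = 2 * ennreal (1 / B ^ n * (2 * zeta_3_2) ^ n)"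
      using B one_le_zeta_3_2 by (subst ennreal_mult) auto
    also have "1 / B ^ n * (2 * zeta_3_2) ^ n = ((2 * zeta_3_2) / B) ^ n"
      by (simp add: power_divide)
    also have "(2 * zeta_3_2) / B = 1 / 2" using one_le_zeta_3_2 by (simp add: B_def)
    also have "2 * ennreal ((1 / 2) ^ n) = ennreal (2 * (1/2) ^ n)" by (subst ennreal_mult) auto
    finally show ?thesis .
  qed
  then have "AE x in lborel. eventually (\<lambda>n. x \<notin> A n) sequentially"
    by (intro AE_eventually_notin_if_summable) (auto simp: A_def summable_geometric)
  then show ?thesis
  proof eventually_elim
    case (elim x)
    have "(\<Prod>i\<in>{1..n}. real (cf_digit x i)) \<le> (B ^ 2) ^ n" if "P n x \<le> B ^ n" for n
      using power_mono[OF that, of 2] by (simp add: P_def prod_nonneg power_mult[symmetric] mult.commute)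
    then show ?case using elim by (auto simp: A_def B_def not_less elim: eventually_mono)
  qed
qed

lemma gauss_map_irrational:
  assumes "x \<in> {0<..<1}" "x \<notin> \<rat>"
  shows "gauss_map x \<in> {0<..<1}" "gauss_map x \<notin> \<rat>"
proof -
  have "1/x \<notin> \<rat>"
  proof
    assume "1/x \<in> \<rat>"
    then have "1/(1/x) \<in> \<rat>" by (rule Rats_divide[OF Rats_1])
    then show False using assms by simp
  qed
  have "frac (1/x) \<notin> \<rat>"
  proof
    assume "frac (1/x) \<in> \<rat>"
    then have "frac (1/x) + of_int \<lfloor>1/x\<rfloor> \<in> \<rat>" by (intro Rats_add) auto
    then show False using \<open>1/x \<notin> \<rat>\<close> by (simp add: frac_def)
  qed
  moreover from this have "frac (1/x) \<noteq> 0" by (metis Rats_0)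
  ultimately show "gauss_map x \<in> {0<..<1}" "gauss_map x \<notin> \<rat>"
    using frac_ge_0[of "1/x"] frac_lt_1[of "1/x"] unfolding gauss_map_def by auto
qed

lemma one_le_cf_digit:
  assumes "x \<in> {0<..<1}" "x \<notin> \<rat>"
  shows "1 \<le> cf_digit x i"
proof -
  have "(gauss_map ^^ j) x \<in> {0<..<1} \<and> (gauss_map ^^ j) x \<notin> \<rat>" for j
    by (induction j) (use assms gauss_map_irrational in auto)
  then have "1 < 1 / (gauss_map ^^ (i - 1)) x" by (simp add: less_divide_eq)
  then show ?thesis unfolding cf_digit_def by linarith
qed

lemma eventually_le_square_imp_le_mult_square:
  fixes f :: "nat \<Rightarrow> real"
  assumes "eventually (\<lambda>i. f i \<le> real i ^ 2) sequentially"
  obtains C where "\<And>i. 1 \<le> i \<Longrightarrow> f i \<le> C * real i ^ 2"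
proof -
  obtain N where N: "\<And>i. N \<le> i \<Longrightarrow> f i \<le> real i ^ 2"
    using assms by (auto simp: eventually_sequentially)
  define C where "C = 1 + (\<Sum>j<N. \<bar>f j\<bar>)"
  have C: "1 \<le> C" unfolding C_def by (simp add: sum_nonneg)
  have "f i \<le> C * real i ^ 2" if "1 \<le> i" for i
  proof (cases "i < N")
    case True
    then have "f i \<le> C" unfolding C_def using member_le_sum[of i "{..<N}" "\<lambda>j. \<bar>f j\<bar>"] by auto
    also have "\<dots> \<le> C * real i ^ 2" using C that by simp
    finally show ?thesis .
  next
    case False
    then show ?thesis using N[of i] C mult_right_mono[OF C, of "real i ^ 2"] by simp
  qed
  then show ?thesis using that by blast
qed

theorem lemma3p8:
  fixes c :: real
  assumes "0 < c" and "c \<le> 1"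
  shows "AE \<alpha> in lborel. \<alpha> \<in> {0<..<1} \<and> \<alpha> \<notin> \<rat> \<longrightarrow>
     (let T = (\<lambda>n::nat. root (nat \<lceil>c * real n\<rceil>) (S_avg \<alpha> n (nat \<lceil>c * real n\<rceil>)))
      in ((\<lambda>n. \<bar>T n - T (Suc n)\<bar>) \<longlonglongrightarrow> 0) \<and>
         (\<lambda>n. \<bar>T n - T (Suc n)\<bar>) \<in> O(\<lambda>n. ln (real n) / real n))"
  using AE_eventually_cf_digit_le_square AE_eventually_prod_cf_digit_le
proof eventually_elim
  case (elim \<alpha>)
  show ?case
  proof (intro impI)
    assume \<alpha>: "\<alpha> \<in> {0<..<1} \<and> \<alpha> \<notin> \<rat>"
    define a where "a i = real (cf_digit \<alpha> i)" for i
    have "eventually (\<lambda>i. a i \<le> real i ^ 2) sequentially"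
      using elim(1) \<alpha> by (auto simp: a_def elim!: eventually_mono simp flip: of_nat_power)
    then obtain C where C: "\<And>i. 1 \<le> i \<Longrightarrow> a i \<le> C * real i ^ 2"
      by (rule eventually_le_square_imp_le_mult_square) blast
    have a: "\<And>i. 1 \<le> i \<Longrightarrow> 1 \<le> a i" using one_le_cf_digit \<alpha> by (simp add: a_def)
    have prod: "eventually (\<lambda>n. (\<Prod>i\<in>{1..n}. a i) \<le> ((4 * zeta_3_2)\<^sup>2) ^ n) sequentially"
      using elim(2) \<alpha> by (simp add: a_def)
    have B: "1 \<le> (4 * zeta_3_2)\<^sup>2" using one_le_zeta_3_2 by (intro one_le_power) simp
    have "S_avg \<alpha> = esym_avg a" by (intro ext) (simp add: S_avg_def esym_avg_def esym_def a_def)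
    then show "let T = (\<lambda>n::nat. root (nat \<lceil>c * real n\<rceil>) (S_avg \<alpha> n (nat \<lceil>c * real n\<rceil>)))
      in ((\<lambda>n. \<bar>T n - T (Suc n)\<bar>) \<longlonglongrightarrow> 0) \<and> (\<lambda>n. \<bar>T n - T (Suc n)\<bar>) \<in> O(\<lambda>n. ln (real n) / real n)"
      using root_esym_avg_diff_bigo[OF assms a C prod B] tendsto_0_if_bigo_ln_over_n by (simp add: Let_def)
  qed
qed

end
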